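(* Let $G$ be an $n$-vertex graph, $f\ge 1$ and $p\ge 1$ integers, and run Algorithm 1 (described in the context) on $G$ with parameters $f,p$. Then the final source set satisfies $|S|\le \lfloor (f+1)n/p\rfloor$, and if $\gamma(n,\ell)$ is an upper bound on the number of edges of the sourcewise spanner $A_S$ whenever $|S|\le \ell$, the returned spanner $H$ has $O\bigl(np+nf+\gamma(n,\lfloor (f+1)n/p\rfloor)\bigr)$ edges.
   Context: Algorithm 1 (input: graph $G$, integers $f,p\ge1$, and a value $\beta$). Initially every vertex is colored white and has $\mathrm{counter}(v)=f+1$; $S=\emptyset$, $E'=\emptyset$. For a vertex $u$, let $N_w(u)$ be the set of currently white neighbors of $u$ and $\delta_w(u)=|N_w(u)|$. While there exists $s\in V\setminus S$ with $\delta_w(s)\ge p$: add $s$ to $S$, color $s$ red, and for each $u\in N_w(s)$ decrement $\mathrm{counter}(u)$, add edge $(s,u)$ to $E'$, and if $\mathrm{counter}(u)=0$ color $u$ black. After the loop, add to $E'$ every edge $(u,v)\in E(G)$ such that $u$ is white. Let $A_S$ be a $\beta$-additive $f$-EFT (resp. $f$-VFT) sourcewise spanner of $G$ with respect to $S$, i.e. a subgraph such that for every set $F$ of at most $f$ edges (resp. vertices) and every $s\in S$, $v\in V(G)$, $d_{A_S-F}(s,v)\le d_{G-F}(s,v)+\beta$. Return $H=(V(G),E'\cup E(A_S))$. *)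

theory Defs
  imports Main "HOL-Library.Extended_Nat"
begin

definition simple_graph :: "'a set \<Rightarrow> 'a set set \<Rightarrow> bool" where
  "simple_graph V E \<longleftrightarrow> finite V \<and> (\<forall>e\<in>E. \<exists>u v. e = {u, v} \<and> u \<noteq> v \<and> u \<in> V \<and> v \<in> V)"

definition walk :: "'a set set \<Rightarrow> 'a list \<Rightarrow> bool" where
  "walk E xs \<longleftrightarrow> xs \<noteq> [] \<and> (\<forall>i. Suc i < length xs \<longrightarrow> {xs ! i, xs ! Suc i} \<in> E)"

text \<open>Shortest-path distance in the graph with edge set E (infinity if unreachable).\<close>
definition gdist :: "'a set set \<Rightarrow> 'a \<Rightarrow> 'a \<Rightarrow> enat" where
  "gdist E u v = (INF xs \<in> {xs. walk E xs \<and> hd xs = u \<and> last xs = v}. enat (length xs - 1))"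

definition del_vertices :: "'a set set \<Rightarrow> 'a set \<Rightarrow> 'a set set" where
  "del_vertices E F = {e \<in> E. e \<inter> F = {}}"

definition eft_sourcewise_spanner ::
  "'a set \<Rightarrow> 'a set set \<Rightarrow> nat \<Rightarrow> nat \<Rightarrow> 'a set \<Rightarrow> 'a set set \<Rightarrow> bool" where
  "eft_sourcewise_spanner V E f \<beta> S A \<longleftrightarrow> A \<subseteq> E \<and>
     (\<forall>F. F \<subseteq> E \<and> card F \<le> f \<longrightarrow>
        (\<forall>s\<in>S. \<forall>v\<in>V. gdist (A - F) s v \<le> gdist (E - F) s v + enat \<beta>))"

definition vft_sourcewise_spanner ::
  "'a set \<Rightarrow> 'a set set \<Rightarrow> nat \<Rightarrow> nat \<Rightarrow> 'a set \<Rightarrow> 'a set set \<Rightarrow> bool" where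
  "vft_sourcewise_spanner V E f \<beta> S A \<longleftrightarrow> A \<subseteq> E \<and>
     (\<forall>F. F \<subseteq> V \<and> card F \<le> f \<longrightarrow>
        (\<forall>s\<in>S - F. \<forall>v\<in>V - F.
           gdist (del_vertices A F) s v \<le> gdist (del_vertices E F) s v + enat \<beta>))"

datatype color = White | Red | Black

definition Nw :: "'a set set \<Rightarrow> ('a \<Rightarrow> color) \<Rightarrow> 'a \<Rightarrow> 'a set" where
  "Nw E col u = {v. {u, v} \<in> E \<and> col v = White}"

text \<open>Algorithm state: (colour, counter, S, E').\<close>
type_synonym 'a alg_state = "('a \<Rightarrow> color) \<times> ('a \<Rightarrow> nat) \<times> 'a set \<times> 'a set set"

definition alg_init :: "nat \<Rightarrow> 'a alg_state" where
  "alg_init f = ((\<lambda>_. White), (\<lambda>_. f + 1), {}, {})"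

definition alg_step :: "'a set \<Rightarrow> 'a set set \<Rightarrow> nat \<Rightarrow> 'a alg_state \<Rightarrow> 'a alg_state \<Rightarrow> bool" where
  "alg_step V E p st st' \<longleftrightarrow>
     (case st of (col, cnt, S, Ep) \<Rightarrow>
       (\<exists>s \<in> V - S. card (Nw E col s) \<ge> p \<and>
          st' = ((\<lambda>u. if u = s then Red
                      else if u \<in> Nw E col s \<and> cnt u - 1 = 0 then Black
                      else col u),
                 (\<lambda>u. if u \<in> Nw E col s then cnt u - 1 else cnt u),
                 insert s S,
                 Ep \<union> {{s, u} | u. u \<in> Nw E col s})))"

text \<open>alg1_run V E f p S E': some execution of the loop of Algorithm 1 terminates with
  source set S, and E' is the edge set after the final step (before adding A_S).\<close>
definition alg1_run :: "'a set \<Rightarrow> 'a set set \<Rightarrow> nat \<Rightarrow> nat \<Rightarrow> 'a set \<Rightarrow> 'a set set \<Rightarrow> bool" where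
  "alg1_run V E f p S E' \<longleftrightarrow>
     (\<exists>col cnt Ep. (alg_step V E p)\<^sup>*\<^sup>* (alg_init f) (col, cnt, S, Ep) \<and>
        \<not> (\<exists>s \<in> V - S. card (Nw E col s) \<ge> p) \<and>
        E' = Ep \<union> {e \<in> E. \<exists>u \<in> e. col u = White})"

end

theory Submission
  imports Defs
begin

text \<open>Each counter starts at f+1 and is decremented at most f+1 times, so the total number
  of decrements is at most (f+1)n. Selecting a source decrements the counters of its at least p
  white neighbours and adds exactly one edge of E' per decrement; hence p|S| \<le> (f+1)n and the loop
  adds at most (f+1)n edges. When the loop stops, every non-source has fewer than p white
  neighbours, and a white vertex has at most f source neighbours since its counter is still
  positive; so at most np + nf edges touch a white vertex. Together with |A_S| this gives the
  bound with constant 3, using n \<le> nf.\<close>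

text \<open>The number of counter decrements so far: each pays for one edge of E', and each source
  costs at least p of them.\<close>

definition charge :: "'a set \<Rightarrow> nat \<Rightarrow> ('a \<Rightarrow> nat) \<Rightarrow> nat" where
  "charge V f cnt = (\<Sum>u\<in>V. f + 1 - cnt u)"

definition source_degree :: "'a set set \<Rightarrow> 'a set \<Rightarrow> 'a \<Rightarrow> nat" where
  "source_degree E S u = card {t \<in> S. {u, t} \<in> E}"

definition decrement :: "'a set \<Rightarrow> ('a \<Rightarrow> nat) \<Rightarrow> 'a \<Rightarrow> nat" where
  "decrement N cnt u = (if u \<in> N then cnt u - 1 else cnt u)"

definition alg_invariant :: "'a set \<Rightarrow> 'a set set \<Rightarrow> nat \<Rightarrow> nat \<Rightarrow> 'a alg_state \<Rightarrow> bool" where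
  "alg_invariant V E f p st = (case st of (col, cnt, S, Ep) \<Rightarrow>
     S \<subseteq> V \<and> (\<forall>u. cnt u \<le> f + 1) \<and>
     (\<forall>u. col u = White \<longrightarrow> 1 \<le> cnt u \<and> source_degree E S u + cnt u = f + 1) \<and>
     card Ep \<le> charge V f cnt \<and> p * card S \<le> charge V f cnt)"

lemma simple_graph_edgeD:
  assumes "simple_graph V E" "{a, b} \<in> E"
  shows "a \<in> V" "b \<in> V"
proof -
  obtain u v where "{a, b} = {u, v}" "u \<in> V" "v \<in> V"
    using assms unfolding simple_graph_def by blast
  then show "a \<in> V" "b \<in> V" by (metis doubleton_eq_iff)+
qed

lemma Nw_subset: "simple_graph V E \<Longrightarrow> Nw E col s \<subseteq> V"
  unfolding Nw_def using simple_graph_edgeD by fastforce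

lemma finite_Nw: "simple_graph V E \<Longrightarrow> finite (Nw E col s)"
  using Nw_subset finite_subset simple_graph_def by metis

lemma card_UN_le_mult:
  assumes "finite I" "\<And>i. i \<in> I \<Longrightarrow> card (B i) \<le> k"
  shows "card (\<Union>i\<in>I. B i) \<le> card I * k"
proof -
  have "card (\<Union>i\<in>I. B i) \<le> (\<Sum>i\<in>I. card (B i))" using assms(1) by (rule card_UN_le)
  also have "\<dots> \<le> card I * k" using sum_bounded_above[of I "\<lambda>i. card (B i)" k] assms(2) by simp
  finally show ?thesis .
qed

lemma card_star_le: "finite N \<Longrightarrow> card {{s, u} | u. u \<in> N} \<le> card N"
  using card_image_le[of N "\<lambda>u. {s, u}"] by (simp add: setcompr_eq_image)

lemma charge_le: "finite V \<Longrightarrow> charge V f cnt \<le> card V * (f + 1)"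
  unfolding charge_def using sum_bounded_above[of V "\<lambda>u. f + 1 - cnt u" "f + 1"] by simp

lemma charge_decrement:
  assumes "finite V" "N \<subseteq> V" "\<And>u. u \<in> N \<Longrightarrow> 1 \<le> cnt u \<and> cnt u \<le> f + 1"
  shows "charge V f (decrement N cnt) = charge V f cnt + card N"
proof -
  have "charge V f (decrement N cnt) = (\<Sum>u\<in>V. (f + 1 - cnt u) + (if u \<in> N then 1 else 0))"
    unfolding charge_def decrement_def using assms(3) by (intro sum.cong) (auto simp: Suc_diff_le)
  also have "\<dots> = charge V f cnt + card (V \<inter> N)"
    using assms(1) by (simp add: sum.distrib sum.If_cases charge_def)
  finally show ?thesis using assms(2) by (simp add: Int_absorb1)
qed

lemma source_degree_insert:
  assumes "finite S" "s \<notin> S"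
  shows "source_degree E (insert s S) u = source_degree E S u + (if {s, u} \<in> E then 1 else 0)"
proof -
  have "{t \<in> insert s S. {u, t} \<in> E} =
        (if {s, u} \<in> E then insert s {t \<in> S. {u, t} \<in> E} else {t \<in> S. {u, t} \<in> E})"
    by (auto simp: insert_commute)
  then show ?thesis using assms by (simp add: source_degree_def)
qed

lemma alg_invariant_step:
  assumes sg: "simple_graph V E" and step: "alg_step V E p st st'"
    and inv: "alg_invariant V E f p st"
  shows "alg_invariant V E f p st'"
proof -
  obtain col cnt S Ep where st: "st = (col, cnt, S, Ep)" by (cases st) auto
  define N where "N s = Nw E col s" for s
  obtain s where s: "s \<in> V - S" "p \<le> card (N s)"
    and st': "st' = ((\<lambda>u. if u = s then Red
                          else if u \<in> N s \<and> cnt u - 1 = 0 then Black else col u),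
                     decrement (N s) cnt, insert s S, Ep \<union> {{s, u} | u. u \<in> N s})"
    using step unfolding alg_step_def st N_def decrement_def by auto
  from inv have SV: "S \<subseteq> V" and cnt_le: "\<forall>u. cnt u \<le> f + 1"
    and white: "\<forall>u. col u = White \<longrightarrow> 1 \<le> cnt u \<and> source_degree E S u + cnt u = f + 1"
    and edges: "card Ep \<le> charge V f cnt" and sources: "p * card S \<le> charge V f cnt"
    unfolding alg_invariant_def st by auto
  have fV: "finite V" and fS: "finite S"
    using sg SV finite_subset unfolding simple_graph_def by auto
  have N_iff: "u \<in> N s \<longleftrightarrow> {s, u} \<in> E \<and> col u = White" for u
    unfolding N_def Nw_def by simp
  have charge': "charge V f (decrement (N s) cnt) = charge V f cnt + card (N s)"
    unfolding N_def
  proof (rule charge_decrement[OF fV Nw_subset[OF sg]])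
    fix u assume "u \<in> Nw E col s"
    then show "1 \<le> cnt u \<and> cnt u \<le> f + 1" using white cnt_le unfolding Nw_def by simp
  qed
  have white': "1 \<le> decrement (N s) cnt u \<and>
                source_degree E (insert s S) u + decrement (N s) cnt u = f + 1"
    if "col u = White" "u \<in> N s \<longrightarrow> cnt u - 1 \<noteq> 0" for u
  proof -
    have old: "1 \<le> cnt u" "source_degree E S u + cnt u = f + 1" using white that(1) by auto
    have "source_degree E (insert s S) u = source_degree E S u + (if u \<in> N s then 1 else 0)"
      using source_degree_insert[OF fS, of s E u] s(1) N_iff[of u] that(1) by simp
    then show ?thesis using old that(2) by (auto simp: decrement_def)
  qed
  have "card (Ep \<union> {{s, u} | u. u \<in> N s}) \<le> card Ep + card {{s, u} | u. u \<in> N s}"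
    by (rule card_Un_le)
  also have "\<dots> \<le> card Ep + card (N s)"
    using card_star_le[OF finite_Nw[OF sg]] unfolding N_def by simp
  finally have edges': "card (Ep \<union> {{s, u} | u. u \<in> N s}) \<le> charge V f (decrement (N s) cnt)"
    using edges charge' by linarith
  have sources': "p * card (insert s S) \<le> charge V f (decrement (N s) cnt)"
    using sources s fS charge' by simp
  have cnt_le': "decrement (N s) cnt u \<le> f + 1" for u
    using cnt_le[rule_format, of u] by (auto simp: decrement_def)
  show ?thesis
    unfolding st' alg_invariant_def prod.case
  proof (intro conjI allI impI edges' sources' cnt_le')
    show "insert s S \<subseteq> V" using SV s(1) by simp
  next
    fix u
    assume "(if u = s then Red else if u \<in> N s \<and> cnt u - 1 = 0 then Black else col u) = White"
    then have "col u = White" "u \<in> N s \<longrightarrow> cnt u - 1 \<noteq> 0"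
      by (auto split: if_splits)
    then show "1 \<le> decrement (N s) cnt u"
      and "source_degree E (insert s S) u + decrement (N s) cnt u = f + 1"
      using white' by blast+
  qed
qed

lemma alg_invariant_run:
  assumes "simple_graph V E" "(alg_step V E p)\<^sup>*\<^sup>* (alg_init f) st"
  shows "alg_invariant V E f p st"
  using assms(2)
proof (induction rule: rtranclp_induct)
  case base
  then show ?case unfolding alg_invariant_def alg_init_def charge_def source_degree_def by simp
next
  case (step st st')
  then show ?case using alg_invariant_step[OF assms(1)] by blast
qed

lemma card_white_edges_le:
  assumes sg: "simple_graph V E" and SV: "S \<subseteq> V"
    and stop: "\<And>v. v \<in> V - S \<Longrightarrow> card (Nw E col v) < p"
    and white: "\<And>u. col u = White \<Longrightarrow> source_degree E S u \<le> f"
  shows "card {e \<in> E. \<exists>u \<in> e. col u = White} \<le> card V * p + card V * f"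
proof -
  have fV: "finite V" and fS: "finite S"
    using sg SV finite_subset unfolding simple_graph_def by auto
  define W where "W = {u \<in> V. col u = White}"
  define nonsource_edges where "nonsource_edges = (\<Union>v\<in>V - S. (\<lambda>w. {v, w}) ` Nw E col v)"
  define source_edges where
    "source_edges = (\<Union>u\<in>W. (\<lambda>t. {u, t}) ` {t \<in> S. {u, t} \<in> E})"
  have cover: "{e \<in> E. \<exists>u \<in> e. col u = White} \<subseteq> nonsource_edges \<union> source_edges"
  proof
    fix e assume "e \<in> {e \<in> E. \<exists>u \<in> e. col u = White}"
    then obtain u where "e \<in> E" "u \<in> e" and u: "col u = White" by blast
    moreover obtain a b where "e = {a, b}" using \<open>e \<in> E\<close> sg unfolding simple_graph_def by blast
    ultimately obtain v where e: "e = {u, v}" "e \<in> E" by blast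
    then have uV: "u \<in> V" and vV: "v \<in> V" using simple_graph_edgeD[OF sg] by auto
    show "e \<in> nonsource_edges \<union> source_edges"
    proof (cases "v \<in> S")
      case True
      then show ?thesis using e u uV unfolding source_edges_def W_def by auto
    next
      case False
      have "u \<in> Nw E col v" using e u unfolding Nw_def by (simp add: insert_commute)
      then have "e \<in> (\<lambda>w. {v, w}) ` Nw E col v" using e by (auto simp: insert_commute)
      then show ?thesis using False vV unfolding nonsource_edges_def by blast
    qed
  qed
  have "card nonsource_edges \<le> card (V - S) * p"
    unfolding nonsource_edges_def
  proof (rule card_UN_le_mult)
    fix v assume "v \<in> V - S"
    then show "card ((\<lambda>w. {v, w}) ` Nw E col v) \<le> p"
      using stop card_image_le[OF finite_Nw[OF sg]] by (meson le_trans less_imp_le)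
  qed (use fV in simp)
  also have "\<dots> \<le> card V * p" using fV by (simp add: card_mono)
  finally have nonsource: "card nonsource_edges \<le> card V * p" .
  have "card source_edges \<le> card W * f"
    unfolding source_edges_def
  proof (rule card_UN_le_mult)
    fix u assume "u \<in> W"
    then show "card ((\<lambda>t. {u, t}) ` {t \<in> S. {u, t} \<in> E}) \<le> f"
      using white[of u] card_image_le[of "{t \<in> S. {u, t} \<in> E}" "\<lambda>t. {u, t}"] fS
      unfolding W_def source_degree_def by simp
  qed (use fV in \<open>simp add: W_def\<close>)
  also have "\<dots> \<le> card V * f" using fV by (simp add: W_def card_mono)
  finally have source: "card source_edges \<le> card V * f" .
  have "finite nonsource_edges" "finite source_edges"
    unfolding nonsource_edges_def source_edges_def W_def using fV fS finite_Nw[OF sg] by simp_all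
  then have "card {e \<in> E. \<exists>u \<in> e. col u = White} \<le> card (nonsource_edges \<union> source_edges)"
    using cover by (intro card_mono) simp_all
  also have "\<dots> \<le> card nonsource_edges + card source_edges" by (rule card_Un_le)
  also have "\<dots> \<le> card V * p + card V * f" using nonsource source by (rule add_le_mono)
  finally show ?thesis .
qed

lemma alg1_run_bounds:
  assumes sg: "simple_graph V E" and p: "p \<ge> 1" and run: "alg1_run V E f p S E'"
  shows "card S \<le> (f + 1) * card V div p"
    and "card E' \<le> card V * (f + 1) + (card V * p + card V * f)"
proof -
  obtain col cnt Ep where reach: "(alg_step V E p)\<^sup>*\<^sup>* (alg_init f) (col, cnt, S, Ep)"
    and stop: "\<not> (\<exists>s \<in> V - S. p \<le> card (Nw E col s))"
    and E': "E' = Ep \<union> {e \<in> E. \<exists>u \<in> e. col u = White}"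
    using run unfolding alg1_run_def by blast
  have SV: "S \<subseteq> V" and white: "\<forall>u. col u = White \<longrightarrow> 1 \<le> cnt u \<and> source_degree E S u + cnt u = f + 1"
    and edges: "card Ep \<le> charge V f cnt" and sources: "p * card S \<le> charge V f cnt"
    using alg_invariant_run[OF sg reach] unfolding alg_invariant_def by auto
  have charge: "charge V f cnt \<le> card V * (f + 1)"
    using sg charge_le unfolding simple_graph_def by blast
  show "card S \<le> (f + 1) * card V div p"
    using sources charge p by (simp add: less_eq_div_iff_mult_less_eq algebra_simps)
  have "card {e \<in> E. \<exists>u \<in> e. col u = White} \<le> card V * p + card V * f"
  proof (rule card_white_edges_le[OF sg SV])
    show "card (Nw E col v) < p" if "v \<in> V - S" for v using stop that not_le by blast
    show "source_degree E S u \<le> f" if "col u = White" for u using white that by fastforce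
  qed
  moreover have "card E' \<le> card Ep + card {e \<in> E. \<exists>u \<in> e. col u = White}"
    unfolding E' by (rule card_Un_le)
  ultimately show "card E' \<le> card V * (f + 1) + (card V * p + card V * f)"
    using edges charge by linarith
qed

theorem lemma1:
  "\<exists>C::real. \<forall>(V::'a set) E f p \<beta> S E' A (\<gamma>::nat \<Rightarrow> nat \<Rightarrow> nat).
     simple_graph V E \<and> f \<ge> 1 \<and> p \<ge> 1 \<and> alg1_run V E f p S E' \<and>
     (eft_sourcewise_spanner V E f \<beta> S A \<or> vft_sourcewise_spanner V E f \<beta> S A) \<and>
     (\<forall>l. card S \<le> l \<longrightarrow> card A \<le> \<gamma> (card V) l)
     \<longrightarrow> card S \<le> (f + 1) * card V div p \<and>
         real (card (E' \<union> A)) \<le> C * real (card V * p + card V * f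
                                        + \<gamma> (card V) ((f + 1) * card V div p))"
proof (intro exI[of _ 3] allI impI, elim conjE)
  fix V :: "'a set" and E f p \<beta> S E' A and \<gamma> :: "nat \<Rightarrow> nat \<Rightarrow> nat"
  assume sg: "simple_graph V E" and f: "f \<ge> 1" and p: "p \<ge> 1" and run: "alg1_run V E f p S E'"
    and "eft_sourcewise_spanner V E f \<beta> S A \<or> vft_sourcewise_spanner V E f \<beta> S A"
    and \<gamma>: "\<forall>l. card S \<le> l \<longrightarrow> card A \<le> \<gamma> (card V) l"
  let ?n = "card V" and ?\<gamma> = "\<gamma> (card V) ((f + 1) * card V div p)"
  have S: "card S \<le> (f + 1) * ?n div p" by (rule alg1_run_bounds(1)[OF sg p run])
  have "?n \<le> ?n * f" using mult_le_mono2[OF f, of ?n] by simp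
  have "card (E' \<union> A) \<le> card E' + card A" by (rule card_Un_le)
  also have "\<dots> \<le> ?n * (f + 1) + (?n * p + ?n * f) + ?\<gamma>"
    using alg1_run_bounds(2)[OF sg p run] \<gamma> S by (meson add_le_mono)
  also have "\<dots> \<le> 3 * (?n * p + ?n * f + ?\<gamma>)"
    using \<open>?n \<le> ?n * f\<close> by (simp only: distrib_left mult_1_right)
  finally have "real (card (E' \<union> A)) \<le> real (3 * (?n * p + ?n * f + ?\<gamma>))"
    by (rule of_nat_mono)
  then show "card S \<le> (f + 1) * ?n div p \<and> real (card (E' \<union> A)) \<le> 3 * real (?n * p + ?n * f + ?\<gamma>)"
    using S by simp
qed

end
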